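(* Let $n\ge1$. If $E$ is an equivalence relation on $\mathbb{N}$ which is not $\Sigma^0_n$, then $E$ is not $\Sigma^0_n$-graphable. In particular, for every $n\ge1$ there are $\Pi^0_n$ equivalence relations on $\mathbb{N}$ which are not $\Sigma^0_n$-graphable.
   Context: $E$ is $\Gamma$-graphable if there is a simple undirected graph $G\subseteq\mathbb{N}\times\mathbb{N}$ in $\Gamma$ whose connectedness relation (connected by a finite path) equals $E$. *)

theory Defs
  imports Main
begin

text \<open>PR n f: f is a primitive recursive function of arity n; f is only
  meaningful on argument lists of length n.\<close>
inductive PR :: "nat \<Rightarrow> (nat list \<Rightarrow> nat) \<Rightarrow> bool" where
  zero: "PR n (\<lambda>_. 0)"
| succ: "PR 1 (\<lambda>xs. Suc (hd xs))"
| proj: "i < n \<Longrightarrow> PR n (\<lambda>xs. xs ! i)"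
| comp: "PR m f \<Longrightarrow> length gs = m \<Longrightarrow> (\<forall>g\<in>set gs. PR n g)
           \<Longrightarrow> PR n (\<lambda>xs. f (map (\<lambda>g. g xs) gs))"
| prec: "PR n f \<Longrightarrow> PR (Suc (Suc n)) g
           \<Longrightarrow> PR (Suc n) (\<lambda>xs. rec_nat (f (tl xs)) (\<lambda>y r. g (y # r # tl xs)) (hd xs))"

text \<open>Sigma^0_0 = primitive recursive (decidable) relations;
  Sigma^0_(n+1) = existential projections of Pi^0_n relations;
  Pi^0_n = complements of Sigma^0_n relations.\<close>
fun sigma_rel :: "nat \<Rightarrow> nat \<Rightarrow> (nat list \<Rightarrow> bool) \<Rightarrow> bool" where
  "sigma_rel 0 k P = (\<exists>f. PR k f \<and> (\<forall>xs. length xs = k \<longrightarrow> (P xs \<longleftrightarrow> f xs \<noteq> 0)))"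
| "sigma_rel (Suc n) k P = (\<exists>Q. sigma_rel n (Suc k) (\<lambda>ys. \<not> Q ys) \<and>
      (\<forall>xs. length xs = k \<longrightarrow> (P xs \<longleftrightarrow> (\<exists>y. Q (y # xs)))))"

definition pi_rel :: "nat \<Rightarrow> nat \<Rightarrow> (nat list \<Rightarrow> bool) \<Rightarrow> bool" where
  "pi_rel n k P = sigma_rel n k (\<lambda>xs. \<not> P xs)"

definition Sigma0 :: "nat \<Rightarrow> (nat \<times> nat) set \<Rightarrow> bool" where
  "Sigma0 n R = sigma_rel n 2 (\<lambda>xs. (xs ! 0, xs ! 1) \<in> R)"

definition Pi0 :: "nat \<Rightarrow> (nat \<times> nat) set \<Rightarrow> bool" where
  "Pi0 n R = pi_rel n 2 (\<lambda>xs. (xs ! 0, xs ! 1) \<in> R)"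

definition Sigma0_graphable :: "nat \<Rightarrow> (nat \<times> nat) set \<Rightarrow> bool" where
  "Sigma0_graphable n E = (\<exists>G :: (nat \<times> nat) set. sym G \<and> irrefl G \<and> Sigma0 n G \<and> G\<^sup>* = E)"

end

theory Submission
  imports Defs "HOL-Library.Nat_Bijection" "HOL-Library.More_List"
begin

text \<open>If a graph \<open>G\<close> on \<open>\<nat>\<close> is \<open>\<Sigma>\<^sub>n\<close> with \<open>n \<ge> 1\<close>, so is its connectedness relation: \<open>x\<close> and \<open>y\<close>
  are connected iff some finite sequence, coded by a single number, starts at \<open>x\<close>, ends at \<open>y\<close> and
  has \<open>G\<close>-related neighbours. This is an existential quantifier in front of a bounded universal one,
  and \<open>\<Sigma>\<^sub>n\<close> absorbs both. Hence an equivalence relation that is not \<open>\<Sigma>\<^sub>n\<close> is not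
  \<open>\<Sigma>\<^sub>n\<close>-graphable.

  For the second part, diagonalising against a universal \<open>\<Sigma>\<^sub>n\<close> relation gives a \<open>\<Pi>\<^sub>n\<close> set \<open>A\<close>
  that is not \<open>\<Sigma>\<^sub>n\<close>. The universal relation rests on a \<open>\<Sigma>\<^sub>1\<close> evaluation predicate for
  primitive recursive terms, which asserts the existence of a finite computation trace. Identifying
  \<open>\<langle>a, i\<rangle>\<close> with \<open>\<langle>a, j\<rangle>\<close> exactly when \<open>a \<in> A\<close> yields a \<open>\<Pi>\<^sub>n\<close> equivalence relation from which
  \<open>A\<close> can be read off, so it is not \<open>\<Sigma>\<^sub>n\<close> and therefore not \<open>\<Sigma>\<^sub>n\<close>-graphable.\<close>

section \<open>Primitive recursive functions\<close>

text \<open>\<open>PR\<close> also fixes the values on argument lists of the wrong length; \<open>prim_rec\<close> ignores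
  them, so that it is invariant under \<open>prim_rec_cong\<close>.\<close>
definition prim_rec :: "nat \<Rightarrow> (nat list \<Rightarrow> nat) \<Rightarrow> bool" where
  "prim_rec n f \<longleftrightarrow> (\<exists>g. PR n g \<and> (\<forall>xs. length xs = n \<longrightarrow> f xs = g xs))"

lemma prim_rec_cong: "prim_rec n f \<Longrightarrow> (\<And>xs. length xs = n \<Longrightarrow> f xs = g xs) \<Longrightarrow> prim_rec n g"
  unfolding prim_rec_def by metis

lemma PR_imp_prim_rec: "PR n f \<Longrightarrow> prim_rec n f"
  unfolding prim_rec_def by blast

lemma prim_rec_zero: "prim_rec n (\<lambda>_. 0)"
  by (rule PR_imp_prim_rec, rule PR.zero)

lemma prim_rec_proj: "i < n \<Longrightarrow> prim_rec n (\<lambda>xs. xs ! i)"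
  by (rule PR_imp_prim_rec, rule PR.proj)

lemma prim_rec_succ: "prim_rec (Suc 0) (\<lambda>xs. Suc (hd xs))"
  using PR_imp_prim_rec[OF PR.succ] by simp

lemma prim_rec_comp:
  assumes f: "prim_rec m f" and len: "length gs = m" and gs: "\<forall>g\<in>set gs. prim_rec n g"
  shows "prim_rec n (\<lambda>xs. f (map (\<lambda>g. g xs) gs))"
proof -
  obtain f' where f': "PR m f'" "\<forall>xs. length xs = m \<longrightarrow> f xs = f' xs"
    using f unfolding prim_rec_def by blast
  obtain r where r: "\<forall>g\<in>set gs. PR n (r g) \<and> (\<forall>xs. length xs = n \<longrightarrow> g xs = r g xs)"
    using bchoice[OF gs[unfolded prim_rec_def]] by blast
  have "PR n (\<lambda>xs. f' (map (\<lambda>h. h xs) (map r gs)))"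
    by (rule PR.comp) (use f' r len in auto)
  moreover have "f (map (\<lambda>g. g xs) gs) = f' (map (\<lambda>h. h xs) (map r gs))" if "length xs = n" for xs
  proof -
    have "map (\<lambda>g. g xs) gs = map (\<lambda>h. h xs) (map r gs)"
      using r that by (induction gs) auto
    then show ?thesis
      using f'(2) len by (simp del: map_eq_conv)
  qed
  ultimately show ?thesis
    unfolding prim_rec_def by blast
qed

lemma prim_rec_prec:
  assumes f: "prim_rec n f" and g: "prim_rec (Suc (Suc n)) g"
  shows "prim_rec (Suc n) (\<lambda>xs. rec_nat (f (tl xs)) (\<lambda>y r. g (y # r # tl xs)) (hd xs))"
proof -
  obtain f' where f': "PR n f'" "\<forall>xs. length xs = n \<longrightarrow> f xs = f' xs"
    using f unfolding prim_rec_def by blast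
  obtain g' where g': "PR (Suc (Suc n)) g'" "\<forall>xs. length xs = Suc (Suc n) \<longrightarrow> g xs = g' xs"
    using g unfolding prim_rec_def by blast
  have "rec_nat (f (tl xs)) (\<lambda>y r. g (y # r # tl xs)) (hd xs)
      = rec_nat (f' (tl xs)) (\<lambda>y r. g' (y # r # tl xs)) (hd xs)" if "length xs = Suc n" for xs
    using that f'(2) g'(2) by simp
  then show ?thesis
    unfolding prim_rec_def using PR.prec[OF f'(1) g'(1)] by blast
qed

definition prim_rec_tuple :: "nat \<Rightarrow> nat \<Rightarrow> (nat list \<Rightarrow> nat list) \<Rightarrow> bool" where
  "prim_rec_tuple n k G \<longleftrightarrow>
    (\<forall>xs. length xs = n \<longrightarrow> length (G xs) = k) \<and> (\<forall>i<k. prim_rec n (\<lambda>xs. G xs ! i))"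

lemma prim_rec_compose: "prim_rec k h \<Longrightarrow> prim_rec_tuple n k G \<Longrightarrow> prim_rec n (\<lambda>xs. h (G xs))"
  unfolding prim_rec_tuple_def
proof (elim conjE)
  assume h: "prim_rec k h" and len: "\<forall>xs. length xs = n \<longrightarrow> length (G xs) = k"
    and G: "\<forall>i<k. prim_rec n (\<lambda>xs. G xs ! i)"
  have "prim_rec n (\<lambda>xs. h (map (\<lambda>g. g xs) (map (\<lambda>i xs. G xs ! i) [0..<k])))"
    by (rule prim_rec_comp[OF h]) (use G in auto)
  then show "prim_rec n (\<lambda>xs. h (G xs))"
  proof (rule prim_rec_cong)
    fix xs :: "nat list"
    assume "length xs = n"
    then have "map ((!) (G xs)) [0..<k] = G xs"
      using len map_nth[of "G xs"] by simp
    then show "h (map (\<lambda>g. g xs) (map (\<lambda>i xs. G xs ! i) [0..<k])) = h (G xs)"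
      by (simp add: comp_def)
  qed
qed

lemma prim_rec_tuple_Nil: "prim_rec_tuple n 0 (\<lambda>xs. [])"
  by (simp add: prim_rec_tuple_def)

lemma prim_rec_tuple_Cons:
  "prim_rec n f \<Longrightarrow> prim_rec_tuple n k G \<Longrightarrow> prim_rec_tuple n (Suc k) (\<lambda>xs. f xs # G xs)"
  unfolding prim_rec_tuple_def by (auto simp: less_Suc_eq_0_disj)

lemma prim_rec_tuple_id: "prim_rec_tuple n n (\<lambda>xs. xs)"
  by (simp add: prim_rec_tuple_def prim_rec_proj)

lemma prim_rec_tuple_tl: "prim_rec_tuple (Suc n) n tl"
  unfolding prim_rec_tuple_def
proof (intro conjI allI impI)
  fix i assume "i < n"
  then show "prim_rec (Suc n) (\<lambda>xs. tl xs ! i)"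
    by (intro prim_rec_cong[OF prim_rec_proj[of "Suc i"]]) (simp_all add: nth_tl)
qed simp

lemma prim_rec_tl_arg: "prim_rec n f \<Longrightarrow> prim_rec (Suc n) (\<lambda>xs. f (tl xs))"
  by (rule prim_rec_compose[OF _ prim_rec_tuple_tl])

lemma prim_rec_tuple_tl_arg: "prim_rec_tuple n k G \<Longrightarrow> prim_rec_tuple (Suc n) k (\<lambda>xs. G (tl xs))"
  unfolding prim_rec_tuple_def by (auto intro: prim_rec_tl_arg)

lemma prim_rec_hd: "prim_rec (Suc n) hd"
  by (rule prim_rec_cong[OF prim_rec_proj[of 0]]) (auto simp: length_Suc_conv)

lemma prim_rec_hd_tl: "prim_rec (Suc (Suc n)) (\<lambda>xs. hd (tl xs))"
  by (rule prim_rec_tl_arg[OF prim_rec_hd])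

lemma prim_rec_hd_tl2: "prim_rec (Suc (Suc (Suc n))) (\<lambda>xs. hd (tl (tl xs)))"
  by (rule prim_rec_tl_arg[OF prim_rec_hd_tl])

lemma prim_rec_nth_tl: "i < n \<Longrightarrow> prim_rec (Suc n) (\<lambda>xs. tl xs ! i)"
  by (rule prim_rec_tl_arg[OF prim_rec_proj])

lemma prim_rec_nth_tl2: "i < n \<Longrightarrow> prim_rec (Suc (Suc n)) (\<lambda>xs. tl (tl xs) ! i)"
  by (rule prim_rec_tl_arg[OF prim_rec_nth_tl])

lemma prim_rec_Suc: "prim_rec n f \<Longrightarrow> prim_rec n (\<lambda>xs. Suc (f xs))"
  using prim_rec_compose[OF prim_rec_succ prim_rec_tuple_Cons[OF _ prim_rec_tuple_Nil]] by simp

lemma prim_rec_const: "prim_rec n (\<lambda>_. c)"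
  by (induction c) (auto intro: prim_rec_zero prim_rec_Suc)

lemma prim_rec_recursion:
  assumes "\<And>xs. F 0 xs = f xs" and "\<And>y xs. F (Suc y) xs = g (y # F y xs # xs)"
    and "prim_rec n f" and "prim_rec (Suc (Suc n)) g" and "prim_rec n a"
  shows "prim_rec n (\<lambda>xs. F (a xs) xs)"
proof -
  have "rec_nat (f xs) (\<lambda>y r. g (y # r # xs)) y = F y xs" for y xs
    by (induction y) (simp_all add: assms(1,2))
  then have "prim_rec (Suc n) (\<lambda>ys. F (hd ys) (tl ys))"
    using prim_rec_prec[OF assms(3,4)] by simp
  from prim_rec_compose[OF this prim_rec_tuple_Cons[OF assms(5) prim_rec_tuple_id]]
  show ?thesis by simp
qed

lemma prim_rec_if_zero:
  assumes "prim_rec n c" and "prim_rec n a" and "prim_rec n b"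
  shows "prim_rec n (\<lambda>xs. if c xs = 0 then b xs else a xs)"
  by (rule prim_rec_recursion[where F = "\<lambda>y xs. if y = 0 then b xs else a xs" and f = b
        and g = "\<lambda>ys. a (tl (tl ys))" and a = c])
     (simp_all add: assms prim_rec_tl_arg[OF prim_rec_tl_arg[OF assms(2)]])

lemma prim_rec_add: "prim_rec n f \<Longrightarrow> prim_rec n g \<Longrightarrow> prim_rec n (\<lambda>xs. f xs + g xs)"
  by (rule prim_rec_recursion[where F = "\<lambda>y xs. y + g xs" and f = g and g = "\<lambda>ys. Suc (ys ! 1)"
        and a = f])
     (simp_all add: prim_rec_Suc prim_rec_proj)

lemma prim_rec_pred: "prim_rec n f \<Longrightarrow> prim_rec n (\<lambda>xs. f xs - 1)"
  by (rule prim_rec_recursion[where F = "\<lambda>y xs. y - 1" and f = "\<lambda>_. 0" and g = hd and a = f])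
     (simp_all add: prim_rec_hd prim_rec_zero)

lemma prim_rec_diff:
  assumes "prim_rec n f" and "prim_rec n g"
  shows "prim_rec n (\<lambda>xs. f xs - g xs)"
proof (rule prim_rec_recursion[where F = "\<lambda>y xs. f xs - y" and f = f and g = "\<lambda>ys. ys ! 1 - 1"
      and a = g])
  show "prim_rec (Suc (Suc n)) (\<lambda>ys. ys ! 1 - 1)"
    by (intro prim_rec_pred prim_rec_proj) simp
qed (simp_all add: assms)

lemma prim_rec_sum:
  assumes h: "prim_rec (Suc n) h" and b: "prim_rec n b"
  shows "prim_rec n (\<lambda>xs. \<Sum>y<b xs. h (y # xs))"
proof (rule prim_rec_recursion[where F = "\<lambda>z xs. \<Sum>y<z. h (y # xs)" and f = "\<lambda>_. 0"
      and g = "\<lambda>ys. ys ! 1 + h (hd ys # tl (tl ys))" and a = b])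
  show "prim_rec (Suc (Suc n)) (\<lambda>ys. ys ! 1 + h (hd ys # tl (tl ys)))"
    by (intro prim_rec_add prim_rec_proj prim_rec_compose[OF h] prim_rec_tuple_Cons
        prim_rec_hd prim_rec_tuple_tl_arg prim_rec_tuple_tl) simp
qed (simp_all add: prim_rec_zero b)

definition prim_rec_rel :: "nat \<Rightarrow> (nat list \<Rightarrow> bool) \<Rightarrow> bool" where
  "prim_rec_rel n P \<longleftrightarrow> prim_rec n (\<lambda>xs. if P xs then 1 else 0)"

lemma prim_rec_rel_cong:
  "prim_rec_rel n P \<Longrightarrow> (\<And>xs. length xs = n \<Longrightarrow> P xs = Q xs) \<Longrightarrow> prim_rec_rel n Q"
  unfolding prim_rec_rel_def by (erule prim_rec_cong) simp

lemma prim_rec_rel_compose: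
  "prim_rec_rel k P \<Longrightarrow> prim_rec_tuple n k G \<Longrightarrow> prim_rec_rel n (\<lambda>xs. P (G xs))"
  unfolding prim_rec_rel_def by (drule (1) prim_rec_compose) simp

lemma prim_rec_if:
  assumes "prim_rec_rel n P" and "prim_rec n a" and "prim_rec n b"
  shows "prim_rec n (\<lambda>xs. if P xs then a xs else b xs)"
  using prim_rec_if_zero[OF assms[unfolded prim_rec_rel_def]] by (rule prim_rec_cong) simp

lemma prim_rec_rel_nonzero: "prim_rec n f \<Longrightarrow> prim_rec_rel n (\<lambda>xs. f xs \<noteq> 0)"
  unfolding prim_rec_rel_def
  by (rule prim_rec_cong[OF prim_rec_if_zero[OF _ prim_rec_const[of n 1] prim_rec_const[of n 0]]])
     auto

lemma prim_rec_rel_not: "prim_rec_rel n P \<Longrightarrow> prim_rec_rel n (\<lambda>xs. \<not> P xs)"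
  unfolding prim_rec_rel_def
  by (rule prim_rec_cong[OF prim_rec_diff[OF prim_rec_const[of n 1]]]) auto

lemma prim_rec_rel_conj:
  assumes "prim_rec_rel n P" and "prim_rec_rel n Q"
  shows "prim_rec_rel n (\<lambda>xs. P xs \<and> Q xs)"
proof -
  from prim_rec_if[OF assms(1) assms(2)[unfolded prim_rec_rel_def] prim_rec_zero]
  show ?thesis
    unfolding prim_rec_rel_def by (rule prim_rec_cong) simp
qed

lemma prim_rec_rel_disj:
  assumes "prim_rec_rel n P" and "prim_rec_rel n Q"
  shows "prim_rec_rel n (\<lambda>xs. P xs \<or> Q xs)"
  using prim_rec_rel_not[OF prim_rec_rel_conj[OF assms[THEN prim_rec_rel_not]]]
  by (rule prim_rec_rel_cong) simp

lemma prim_rec_rel_less: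
  assumes "prim_rec n f" and "prim_rec n g"
  shows "prim_rec_rel n (\<lambda>xs. f xs < g xs)"
  using prim_rec_rel_nonzero[OF prim_rec_diff[OF assms(2,1)]] by (rule prim_rec_rel_cong) auto

lemma prim_rec_rel_eq:
  assumes "prim_rec n f" and "prim_rec n g"
  shows "prim_rec_rel n (\<lambda>xs. f xs = g xs)"
  using prim_rec_rel_not[OF prim_rec_rel_disj[OF prim_rec_rel_less[OF assms] prim_rec_rel_less[OF assms(2,1)]]]
  by (rule prim_rec_rel_cong) auto

text \<open>A relation with a distinguished first argument \<open>y\<close> is written \<open>\<lambda>ys. P (hd ys) (tl ys)\<close>,
  a shape that higher-order unification can match against any body of a quantifier over \<open>y\<close>.\<close>
lemma prim_rec_rel_ball:
  assumes P: "prim_rec_rel (Suc n) (\<lambda>ys. P (hd ys) (tl ys))" and b: "prim_rec n b"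
  shows "prim_rec_rel n (\<lambda>xs. \<forall>y<b xs. P y xs)"
proof -
  have "prim_rec (Suc n) (\<lambda>ys. if P (hd ys) (tl ys) then 0 else 1)"
    by (intro prim_rec_if P prim_rec_const)
  from prim_rec_rel_nonzero[OF prim_rec_sum[OF this b]]
  show ?thesis
    by (rule prim_rec_rel_not[THEN prim_rec_rel_cong]) auto
qed

lemma prim_rec_rel_bex:
  assumes "prim_rec_rel (Suc n) (\<lambda>ys. P (hd ys) (tl ys))" and "prim_rec n b"
  shows "prim_rec_rel n (\<lambda>xs. \<exists>y<b xs. P y xs)"
  using prim_rec_rel_not[OF prim_rec_rel_ball[OF prim_rec_rel_not[OF assms(1)] assms(2)]]
  by (rule prim_rec_rel_cong) simp

lemma prim_rec_of_bounded_graph: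
  assumes R: "prim_rec_rel (Suc n) (\<lambda>ys. R (hd ys) (tl ys))" and b: "prim_rec n b"
    and f: "\<And>xs. length xs = n \<Longrightarrow> f xs \<le> b xs \<and> R (f xs) xs \<and> (\<forall>y. R y xs \<longrightarrow> y = f xs)"
  shows "prim_rec n f"
proof -
  have "prim_rec (Suc n) (\<lambda>ys. if R (hd ys) (tl ys) then hd ys else 0)"
    by (intro prim_rec_if R prim_rec_hd prim_rec_zero)
  from prim_rec_sum[OF this prim_rec_Suc[OF b]]
  show ?thesis
  proof (rule prim_rec_cong)
    fix xs :: "nat list"
    assume "length xs = n"
    note f = f[OF this]
    have "(\<Sum>y<Suc (b xs). if R (hd (y # xs)) (tl (y # xs)) then hd (y # xs) else 0)
        = (\<Sum>y<Suc (b xs). if y = f xs then y else 0)"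
      by (rule sum.cong) (use f in auto)
    also have "\<dots> = f xs"
      using f by (simp add: sum.delta' less_Suc_eq_le)
    finally show "(\<Sum>y<Suc (b xs). if R (hd (y # xs)) (tl (y # xs)) then hd (y # xs) else 0) = f xs" .
  qed
qed

section \<open>Coding pairs and lists\<close>

lemma prim_rec_triangle: "prim_rec n f \<Longrightarrow> prim_rec n (\<lambda>xs. triangle (f xs))"
  by (rule prim_rec_recursion[where F = "\<lambda>y xs. triangle y" and f = "\<lambda>_. 0"
        and g = "\<lambda>ys. ys ! 1 + Suc (ys ! 0)" and a = f])
     (simp_all add: prim_rec_zero prim_rec_add prim_rec_Suc prim_rec_proj)

lemma prim_rec_prod_encode:
  "prim_rec n f \<Longrightarrow> prim_rec n g \<Longrightarrow> prim_rec n (\<lambda>xs. prod_encode (f xs, g xs))"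
  unfolding prod_encode_def by (simp add: prim_rec_add prim_rec_triangle)

lemma prim_rec_fst_prod_decode:
  assumes f: "prim_rec n f"
  shows "prim_rec n (\<lambda>xs. fst (prod_decode (f xs)))"
proof (rule prim_rec_of_bounded_graph[where R = "\<lambda>y xs. \<exists>c<Suc (f xs). prod_encode (y, c) = f xs"])
  show "prim_rec_rel (Suc n) (\<lambda>ys. \<exists>c<Suc (f (tl ys)). prod_encode (hd ys, c) = f (tl ys))"
    by (intro prim_rec_rel_bex prim_rec_rel_eq prim_rec_prod_encode prim_rec_hd_tl prim_rec_hd
        prim_rec_Suc prim_rec_tl_arg f)
  fix xs :: "nat list"
  show "fst (prod_decode (f xs)) \<le> f xs \<and>
    (\<exists>c<Suc (f xs). prod_encode (fst (prod_decode (f xs)), c) = f xs) \<and>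
    (\<forall>y. (\<exists>c<Suc (f xs). prod_encode (y, c) = f xs) \<longrightarrow> y = fst (prod_decode (f xs)))"
  proof -
    obtain a c where ac: "prod_decode (f xs) = (a, c)"
      by fastforce
    then have "f xs = prod_encode (a, c)"
      using prod_decode_inverse[of "f xs"] by simp
    then show ?thesis
      using ac le_prod_encode_1[of a c] le_prod_encode_2[of c a] by (auto intro!: exI[of _ c])
  qed
qed (fact f)

lemma prim_rec_snd_prod_decode:
  assumes f: "prim_rec n f"
  shows "prim_rec n (\<lambda>xs. snd (prod_decode (f xs)))"
proof (rule prim_rec_of_bounded_graph[where R = "\<lambda>y xs. \<exists>c<Suc (f xs). prod_encode (c, y) = f xs"])
  show "prim_rec_rel (Suc n) (\<lambda>ys. \<exists>c<Suc (f (tl ys)). prod_encode (c, hd ys) = f (tl ys))"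
    by (intro prim_rec_rel_bex prim_rec_rel_eq prim_rec_prod_encode prim_rec_hd_tl prim_rec_hd
        prim_rec_Suc prim_rec_tl_arg f)
  fix xs :: "nat list"
  show "snd (prod_decode (f xs)) \<le> f xs \<and>
    (\<exists>c<Suc (f xs). prod_encode (c, snd (prod_decode (f xs))) = f xs) \<and>
    (\<forall>y. (\<exists>c<Suc (f xs). prod_encode (c, y) = f xs) \<longrightarrow> y = snd (prod_decode (f xs)))"
  proof -
    obtain a c where ac: "prod_decode (f xs) = (c, a)"
      by fastforce
    then have "f xs = prod_encode (c, a)"
      using prod_decode_inverse[of "f xs"] by simp
    then show ?thesis
      using ac le_prod_encode_1[of c a] le_prod_encode_2[of a c] by (auto intro!: exI[of _ c])
  qed
qed (fact f)

definition prim_rec_list :: "nat \<Rightarrow> (nat list \<Rightarrow> nat list) \<Rightarrow> bool" where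
  "prim_rec_list n F \<longleftrightarrow> prim_rec n (\<lambda>xs. list_encode (F xs))"

lemma prim_rec_list_decode: "prim_rec n f \<Longrightarrow> prim_rec_list n (\<lambda>xs. list_decode (f xs))"
  by (simp add: prim_rec_list_def)

lemma prim_rec_list_Cons:
  "prim_rec n f \<Longrightarrow> prim_rec_list n F \<Longrightarrow> prim_rec_list n (\<lambda>xs. f xs # F xs)"
  unfolding prim_rec_list_def by (simp add: prim_rec_Suc prim_rec_prod_encode)

lemma prim_rec_list_tl_arg: "prim_rec_list n F \<Longrightarrow> prim_rec_list (Suc n) (\<lambda>xs. F (tl xs))"
  unfolding prim_rec_list_def by (rule prim_rec_tl_arg)

lemma list_encode_tl: "list_encode (tl xs) = snd (prod_decode (list_encode xs - 1))"
  by (cases xs) (simp add: prod_decode_def prod_decode_aux.simps, simp)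

lemma nth_default_0_conv_list_encode: "nth_default 0 xs 0 = fst (prod_decode (list_encode xs - 1))"
  by (cases xs) (simp add: prod_decode_def prod_decode_aux.simps, simp)

lemma prim_rec_list_tl: "prim_rec_list n F \<Longrightarrow> prim_rec_list n (\<lambda>xs. tl (F xs))"
  unfolding prim_rec_list_def list_encode_tl by (intro prim_rec_snd_prod_decode prim_rec_pred)

lemma prim_rec_list_of_tuple: "prim_rec_tuple n k G \<Longrightarrow> prim_rec_list n G"
proof (induction k arbitrary: G)
  case 0
  then have "list_encode (G xs) = 0" if "length xs = n" for xs
    using that by (simp add: prim_rec_tuple_def)
  then show ?case
    unfolding prim_rec_list_def by (intro prim_rec_cong[OF prim_rec_zero]) simp
next
  case (Suc k)
  then have len: "length (G xs) = Suc k" if "length xs = n" for xs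
    using that by (simp add: prim_rec_tuple_def)
  have "prim_rec n (\<lambda>xs. tl (G xs) ! i)" if "i < k" for i
  proof -
    have "prim_rec n (\<lambda>xs. G xs ! Suc i)"
      using Suc.prems that by (simp add: prim_rec_tuple_def)
    then show ?thesis
      by (rule prim_rec_cong) (simp add: nth_tl len that)
  qed
  then have "prim_rec_list n (\<lambda>xs. G xs ! 0 # tl (G xs))"
    using Suc.prems len by (intro prim_rec_list_Cons Suc.IH) (simp_all add: prim_rec_tuple_def)
  then show ?case
    unfolding prim_rec_list_def
    by (rule prim_rec_cong) (metis len length_0_conv nat.distinct(1) hd_Cons_tl hd_conv_nth)
qed

lemma prim_rec_list_drop:
  assumes F: "prim_rec_list n F" and i: "prim_rec n i"
  shows "prim_rec_list n (\<lambda>xs. drop (i xs) (F xs))"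
  unfolding prim_rec_list_def
proof (rule prim_rec_recursion[where F = "\<lambda>y xs. list_encode (drop y (F xs))"
      and g = "\<lambda>ys. snd (prod_decode (ys ! 1 - 1))" and a = i])
  show "list_encode (drop (Suc y) (F xs)) = snd (prod_decode ((y # list_encode (drop y (F xs)) # xs) ! 1 - 1))"
    for y xs
    using list_encode_tl[of "drop y (F xs)"] by (simp add: tl_drop drop_Suc)
  show "prim_rec (Suc (Suc n)) (\<lambda>ys. snd (prod_decode (ys ! 1 - 1)))"
    by (intro prim_rec_snd_prod_decode prim_rec_pred prim_rec_proj) simp
qed (use F i in \<open>simp_all add: prim_rec_list_def\<close>)

lemma prim_rec_nth_default:
  assumes "prim_rec_list n F" and "prim_rec n i"
  shows "prim_rec n (\<lambda>xs. nth_default 0 (F xs) (i xs))"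
proof -
  have "nth_default 0 xs i = nth_default 0 (drop i xs) 0" for xs :: "nat list" and i
    by (simp add: nth_default_def)
  moreover have "prim_rec n (\<lambda>xs. fst (prod_decode (list_encode (drop (i xs) (F xs)) - 1)))"
    using prim_rec_list_drop[OF assms] unfolding prim_rec_list_def
    by (intro prim_rec_fst_prod_decode prim_rec_pred)
  ultimately show ?thesis
    by (simp add: nth_default_0_conv_list_encode)
qed

lemma length_le_list_encode: "length xs \<le> list_encode xs"
proof (induction xs)
  case (Cons x xs)
  then show ?case
    using le_prod_encode_2[of "list_encode xs" x] by simp
qed simp

lemma prim_rec_length:
  assumes F: "prim_rec_list n F"
  shows "prim_rec n (\<lambda>xs. length (F xs))"
proof -
  have "length xs = (\<Sum>i<list_encode xs. if list_encode (drop i xs) = 0 then 0 else 1)"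
    for xs :: "nat list"
  proof -
    have "list_encode ys = 0 \<longleftrightarrow> ys = []" for ys
      by (cases ys) simp_all
    then have "(\<Sum>i<list_encode xs. if list_encode (drop i xs) = 0 then 0 else 1) = (\<Sum>i<length xs. 1::nat)"
      using length_le_list_encode[of xs] by (intro sum.mono_neutral_cong_right) auto
    then show ?thesis
      by simp
  qed
  moreover have "prim_rec (Suc n) (\<lambda>ys. if list_encode (drop (hd ys) (F (tl ys))) = 0 then 0 else 1)"
    using prim_rec_list_drop[OF prim_rec_list_tl_arg[OF F] prim_rec_hd]
    unfolding prim_rec_list_def by (intro prim_rec_if prim_rec_rel_eq prim_rec_const)
  from prim_rec_sum[OF this F[unfolded prim_rec_list_def]]
  have "prim_rec n (\<lambda>xs. \<Sum>i<list_encode (F xs). if list_encode (drop i (F xs)) = 0 then 0 else 1)"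
    by simp
  ultimately show ?thesis
    by simp
qed

lemma prim_rec_rel_member:
  assumes f: "prim_rec n f" and F: "prim_rec_list n F"
  shows "prim_rec_rel n (\<lambda>xs. f xs \<in> set (F xs))"
proof -
  have "prim_rec_rel n (\<lambda>xs. \<exists>i<length (F xs). nth_default 0 (F xs) i = f xs)"
    by (intro prim_rec_rel_bex prim_rec_rel_eq prim_rec_length F prim_rec_tl_arg f
        prim_rec_nth_default[OF prim_rec_list_tl_arg[OF F] prim_rec_hd])
  then show ?thesis
    by (rule prim_rec_rel_cong) (auto simp: in_set_conv_nth nth_default_nth)
qed

lemma ball_set_conv_nth_default: "(\<forall>x\<in>set xs. P x) \<longleftrightarrow> (\<forall>i<length xs. P (nth_default d xs i))"
  by (metis in_set_conv_nth nth_default_nth)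

lemma ex_list_conv_ex_list_decode: "(\<exists>xs. P xs) \<longleftrightarrow> (\<exists>c. P (list_decode c))"
  by (metis list_encode_inverse)

section \<open>Closure properties of the arithmetical hierarchy\<close>

lemma sigma_rel_cong:
  "sigma_rel m k P \<Longrightarrow> (\<And>xs. length xs = k \<Longrightarrow> P xs = Q xs) \<Longrightarrow> sigma_rel m k Q"
  by (cases m) auto

lemma sigma_rel_0_iff: "sigma_rel 0 k P \<longleftrightarrow> prim_rec_rel k P"
proof
  assume "sigma_rel 0 k P"
  then obtain f where f: "PR k f" "\<forall>xs. length xs = k \<longrightarrow> (P xs \<longleftrightarrow> f xs \<noteq> 0)"
    by auto
  from prim_rec_rel_nonzero[OF PR_imp_prim_rec[OF f(1)]] show "prim_rec_rel k P"
    by (rule prim_rec_rel_cong) (use f(2) in auto)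
next
  assume "prim_rec_rel k P"
  then obtain g where g: "PR k g" "\<forall>xs. length xs = k \<longrightarrow> (if P xs then 1 else 0) = g xs"
    unfolding prim_rec_rel_def prim_rec_def by auto
  then have "\<forall>xs. length xs = k \<longrightarrow> (P xs \<longleftrightarrow> g xs \<noteq> 0)"
    by (metis one_neq_zero)
  with g(1) show "sigma_rel 0 k P"
    by auto
qed

lemma sigma_rel_SucI:
  "sigma_rel m (Suc k) (\<lambda>ys. \<not> Q ys) \<Longrightarrow> (\<And>xs. length xs = k \<Longrightarrow> P xs \<longleftrightarrow> (\<exists>y. Q (y # xs)))
    \<Longrightarrow> sigma_rel (Suc m) k P"
  by auto

lemma sigma_rel_compose:
  "sigma_rel m k P \<Longrightarrow> prim_rec_tuple n k G \<Longrightarrow> sigma_rel m n (\<lambda>xs. P (G xs))"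
proof (induction m arbitrary: k n P G)
  case 0
  then show ?case
    by (simp add: sigma_rel_0_iff prim_rec_rel_compose del: sigma_rel.simps)
next
  case (Suc m)
  obtain Q where Q: "sigma_rel m (Suc k) (\<lambda>ys. \<not> Q ys)"
    and P: "\<forall>xs. length xs = k \<longrightarrow> P xs \<longleftrightarrow> (\<exists>y. Q (y # xs))"
    using Suc.prems(1) by auto
  have "prim_rec_tuple (Suc n) (Suc k) (\<lambda>ys. hd ys # G (tl ys))"
    by (intro prim_rec_tuple_Cons prim_rec_hd prim_rec_tuple_tl_arg Suc.prems(2))
  from Suc.IH[OF Q this] show ?case
  proof (rule sigma_rel_SucI)
    fix xs :: "nat list"
    assume "length xs = n"
    then show "P (G xs) \<longleftrightarrow> (\<exists>y. Q (hd (y # xs) # G (tl (y # xs))))"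
      using P Suc.prems(2) by (simp add: prim_rec_tuple_def)
  qed
qed

lemma sigma_rel_of_prim_rec_rel: "prim_rec_rel n P \<Longrightarrow> sigma_rel m n P"
proof (induction m arbitrary: n P)
  case 0
  then show ?case
    by (simp add: sigma_rel_0_iff del: sigma_rel.simps)
next
  case (Suc m)
  have "sigma_rel m (Suc n) (\<lambda>ys. \<not> P (tl ys))"
    by (intro Suc.IH prim_rec_rel_not prim_rec_rel_compose[OF Suc.prems] prim_rec_tuple_tl)
  then show ?case
    by (rule sigma_rel_SucI) simp
qed

text \<open>The step from \<open>\<Sigma>\<^sub>m\<close> to \<open>\<Sigma>\<^sub>m\<^sub>+\<^sub>1\<close> negates the matrix, so each closure property
  at level \<open>m + 1\<close> needs the dual one at level \<open>m\<close>; they are proved by simultaneous induction.\<close>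
lemma sigma_rel_Suc_conj:
  assumes disj: "\<And>P Q. sigma_rel m (Suc n) P \<Longrightarrow> sigma_rel m (Suc n) Q
      \<Longrightarrow> sigma_rel m (Suc n) (\<lambda>xs. P xs \<or> Q xs)"
    and P1: "sigma_rel (Suc m) n P1" and P2: "sigma_rel (Suc m) n P2"
  shows "sigma_rel (Suc m) n (\<lambda>xs. P1 xs \<and> P2 xs)"
proof -
  obtain Q1 where Q1: "sigma_rel m (Suc n) (\<lambda>ys. \<not> Q1 ys)"
    and P1: "\<forall>xs. length xs = n \<longrightarrow> P1 xs \<longleftrightarrow> (\<exists>y. Q1 (y # xs))"
    using P1 by auto
  obtain Q2 where Q2: "sigma_rel m (Suc n) (\<lambda>ys. \<not> Q2 ys)"
    and P2: "\<forall>xs. length xs = n \<longrightarrow> P2 xs \<longleftrightarrow> (\<exists>y. Q2 (y # xs))"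
    using P2 by auto
  let ?Q = "\<lambda>ys. Q1 (fst (prod_decode (hd ys)) # tl ys) \<and> Q2 (snd (prod_decode (hd ys)) # tl ys)"
  have "sigma_rel m (Suc n)
      (\<lambda>ys. \<not> Q1 (fst (prod_decode (hd ys)) # tl ys) \<or> \<not> Q2 (snd (prod_decode (hd ys)) # tl ys))"
    by (intro disj sigma_rel_compose[OF Q1] sigma_rel_compose[OF Q2] prim_rec_tuple_Cons
        prim_rec_fst_prod_decode prim_rec_snd_prod_decode prim_rec_hd prim_rec_tuple_tl)
  then have "sigma_rel m (Suc n) (\<lambda>ys. \<not> ?Q ys)"
    by (rule sigma_rel_cong) simp
  then show ?thesis
  proof (rule sigma_rel_SucI)
    fix xs :: "nat list"
    assume "length xs = n"
    then have "P1 xs \<and> P2 xs \<longleftrightarrow> (\<exists>y1 y2. Q1 (y1 # xs) \<and> Q2 (y2 # xs))"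
      using P1 P2 by blast
    also have "\<dots> \<longleftrightarrow> (\<exists>y. ?Q (y # xs))"
      by (metis fst_conv list.sel(1,3) prod_encode_inverse snd_conv)
    finally show "P1 xs \<and> P2 xs \<longleftrightarrow> (\<exists>y. ?Q (y # xs))" .
  qed
qed

lemma sigma_rel_Suc_disj:
  assumes conj: "\<And>P Q. sigma_rel m (Suc n) P \<Longrightarrow> sigma_rel m (Suc n) Q
      \<Longrightarrow> sigma_rel m (Suc n) (\<lambda>xs. P xs \<and> Q xs)"
    and P1: "sigma_rel (Suc m) n P1" and P2: "sigma_rel (Suc m) n P2"
  shows "sigma_rel (Suc m) n (\<lambda>xs. P1 xs \<or> P2 xs)"
proof -
  obtain Q1 where Q1: "sigma_rel m (Suc n) (\<lambda>ys. \<not> Q1 ys)"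
    and P1: "\<forall>xs. length xs = n \<longrightarrow> P1 xs \<longleftrightarrow> (\<exists>y. Q1 (y # xs))"
    using P1 by auto
  obtain Q2 where Q2: "sigma_rel m (Suc n) (\<lambda>ys. \<not> Q2 ys)"
    and P2: "\<forall>xs. length xs = n \<longrightarrow> P2 xs \<longleftrightarrow> (\<exists>y. Q2 (y # xs))"
    using P2 by auto
  from conj[OF Q1 Q2] have "sigma_rel m (Suc n) (\<lambda>ys. \<not> (Q1 ys \<or> Q2 ys))"
    by (rule sigma_rel_cong) simp
  then show ?thesis
    by (rule sigma_rel_SucI) (use P1 P2 in blast)
qed

lemma sigma_rel_conj_disj:
  "(sigma_rel m n P \<longrightarrow> sigma_rel m n Q \<longrightarrow> sigma_rel m n (\<lambda>xs. P xs \<and> Q xs)) \<and>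
   (sigma_rel m n P \<longrightarrow> sigma_rel m n Q \<longrightarrow> sigma_rel m n (\<lambda>xs. P xs \<or> Q xs))"
proof (induction m arbitrary: n P Q)
  case 0
  then show ?case
    by (simp add: sigma_rel_0_iff prim_rec_rel_conj prim_rec_rel_disj del: sigma_rel.simps)
next
  case (Suc m)
  then show ?case
    by (blast intro: sigma_rel_Suc_conj sigma_rel_Suc_disj)
qed

lemma sigma_rel_conj:
  "sigma_rel m n P \<Longrightarrow> sigma_rel m n Q \<Longrightarrow> sigma_rel m n (\<lambda>xs. P xs \<and> Q xs)"
  using sigma_rel_conj_disj by blast

lemma sigma_rel_disj:
  "sigma_rel m n P \<Longrightarrow> sigma_rel m n Q \<Longrightarrow> sigma_rel m n (\<lambda>xs. P xs \<or> Q xs)"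
  using sigma_rel_conj_disj by blast

lemma sigma_rel_Suc_bex:
  assumes ball: "\<And>P b. sigma_rel m (Suc (Suc n)) (\<lambda>ys. P (hd ys) (tl ys)) \<Longrightarrow> prim_rec (Suc n) b
      \<Longrightarrow> sigma_rel m (Suc n) (\<lambda>xs. \<forall>y<b xs. P y xs)"
    and P: "sigma_rel (Suc m) (Suc n) (\<lambda>ys. P (hd ys) (tl ys))" and b: "prim_rec n b"
  shows "sigma_rel (Suc m) n (\<lambda>xs. \<exists>y<b xs. P y xs)"
proof -
  obtain Q where Q: "sigma_rel m (Suc (Suc n)) (\<lambda>ys. \<not> Q ys)"
    and PQ: "\<forall>ys. length ys = Suc n \<longrightarrow> P (hd ys) (tl ys) \<longleftrightarrow> (\<exists>z. Q (z # ys))"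
    using P by auto
  let ?Q = "\<lambda>zs. \<exists>y<b (tl zs). Q (hd zs # y # tl zs)"
  have "sigma_rel m (Suc (Suc n)) (\<lambda>ws. \<not> Q (hd (tl ws) # hd ws # tl (tl ws)))"
    by (intro sigma_rel_compose[OF Q] prim_rec_tuple_Cons prim_rec_hd prim_rec_hd_tl
        prim_rec_tuple_tl_arg prim_rec_tuple_tl)
  from ball[OF this prim_rec_tl_arg[OF b]] have "sigma_rel m (Suc n) (\<lambda>zs. \<not> ?Q zs)"
    by (rule sigma_rel_cong) auto
  then show ?thesis
  proof (rule sigma_rel_SucI)
    fix xs :: "nat list"
    assume "length xs = n"
    then have "P y xs \<longleftrightarrow> (\<exists>z. Q (z # y # xs))" for y
      using PQ[rule_format, of "y # xs"] by simp
    then show "(\<exists>y<b xs. P y xs) \<longleftrightarrow> (\<exists>z. ?Q (z # xs))"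
      by auto
  qed
qed

text \<open>A bounded universal quantifier is pushed inside the unbounded existential one by
  coding the finitely many witnesses as a list.\<close>
lemma sigma_rel_Suc_ball:
  assumes bex: "\<And>P b. sigma_rel m (Suc (Suc n)) (\<lambda>ys. P (hd ys) (tl ys)) \<Longrightarrow> prim_rec (Suc n) b
      \<Longrightarrow> sigma_rel m (Suc n) (\<lambda>xs. \<exists>y<b xs. P y xs)"
    and P: "sigma_rel (Suc m) (Suc n) (\<lambda>ys. P (hd ys) (tl ys))" and b: "prim_rec n b"
  shows "sigma_rel (Suc m) n (\<lambda>xs. \<forall>y<b xs. P y xs)"
proof -
  obtain Q where Q: "sigma_rel m (Suc (Suc n)) (\<lambda>ys. \<not> Q ys)"
    and PQ: "\<forall>ys. length ys = Suc n \<longrightarrow> P (hd ys) (tl ys) \<longleftrightarrow> (\<exists>z. Q (z # ys))"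
    using P by auto
  let ?Q = "\<lambda>zs. \<forall>y<b (tl zs). Q (nth_default 0 (list_decode (hd zs)) y # y # tl zs)"
  have "sigma_rel m (Suc (Suc n))
      (\<lambda>ws. \<not> Q (nth_default 0 (list_decode (hd (tl ws))) (hd ws) # hd ws # tl (tl ws)))"
    by (intro sigma_rel_compose[OF Q] prim_rec_tuple_Cons prim_rec_hd prim_rec_tuple_tl_arg
        prim_rec_tuple_tl prim_rec_nth_default prim_rec_list_decode prim_rec_hd_tl)
  from bex[OF this prim_rec_tl_arg[OF b]] have "sigma_rel m (Suc n) (\<lambda>zs. \<not> ?Q zs)"
    by (rule sigma_rel_cong) auto
  then show ?thesis
  proof (rule sigma_rel_SucI)
    fix xs :: "nat list"
    assume "length xs = n"
    then have PQ': "P y xs \<longleftrightarrow> (\<exists>z. Q (z # y # xs))" for y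
      using PQ[rule_format, of "y # xs"] by simp
    show "(\<forall>y<b xs. P y xs) \<longleftrightarrow> (\<exists>s. ?Q (s # xs))"
    proof
      assume "\<forall>y<b xs. P y xs"
      then obtain z where "\<forall>y<b xs. Q (z y # y # xs)"
        using PQ' by metis
      then have "?Q (list_encode (map z [0..<b xs]) # xs)"
        by (simp add: nth_default_nth)
      then show "\<exists>s. ?Q (s # xs)" ..
    qed (use PQ' in auto)
  qed
qed

lemma sigma_rel_ball_bex:
  "prim_rec n b \<Longrightarrow> sigma_rel m (Suc n) (\<lambda>ys. P (hd ys) (tl ys)) \<Longrightarrow>
    sigma_rel m n (\<lambda>xs. \<forall>y<b xs. P y xs) \<and> sigma_rel m n (\<lambda>xs. \<exists>y<b xs. P y xs)"
proof (induction m arbitrary: n P b)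
  case 0
  then show ?case
    by (simp add: sigma_rel_0_iff prim_rec_rel_ball prim_rec_rel_bex del: sigma_rel.simps)
next
  case (Suc m)
  then show ?case
    by (blast intro: sigma_rel_Suc_ball sigma_rel_Suc_bex)
qed

lemma sigma_rel_ball:
  "sigma_rel m (Suc n) (\<lambda>ys. P (hd ys) (tl ys)) \<Longrightarrow> prim_rec n b
    \<Longrightarrow> sigma_rel m n (\<lambda>xs. \<forall>y<b xs. P y xs)"
  using sigma_rel_ball_bex by blast

lemma sigma_rel_ex:
  assumes P: "sigma_rel (Suc m) (Suc n) (\<lambda>ys. P (hd ys) (tl ys))"
  shows "sigma_rel (Suc m) n (\<lambda>xs. \<exists>y. P y xs)"
proof -
  obtain Q where Q: "sigma_rel m (Suc (Suc n)) (\<lambda>ys. \<not> Q ys)"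
    and PQ: "\<forall>ys. length ys = Suc n \<longrightarrow> P (hd ys) (tl ys) \<longleftrightarrow> (\<exists>z. Q (z # ys))"
    using P by auto
  let ?Q = "\<lambda>ws. Q (snd (prod_decode (hd ws)) # fst (prod_decode (hd ws)) # tl ws)"
  have "sigma_rel m (Suc n) (\<lambda>ws. \<not> ?Q ws)"
    by (intro sigma_rel_compose[OF Q] prim_rec_tuple_Cons prim_rec_fst_prod_decode
        prim_rec_snd_prod_decode prim_rec_hd prim_rec_tuple_tl)
  then show ?thesis
  proof (rule sigma_rel_SucI)
    fix xs :: "nat list"
    assume "length xs = n"
    then have "P y xs \<longleftrightarrow> (\<exists>z. Q (z # y # xs))" for y
      using PQ[rule_format, of "y # xs"] by simp
    then have "(\<exists>y. P y xs) \<longleftrightarrow> (\<exists>y z. Q (z # y # xs))"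
      by blast
    also have "\<dots> \<longleftrightarrow> (\<exists>p. ?Q (p # xs))"
      by (metis fst_conv list.sel(1,3) prod_encode_inverse snd_conv)
    finally show "(\<exists>y. P y xs) \<longleftrightarrow> (\<exists>p. ?Q (p # xs))" .
  qed
qed

section \<open>Evaluation of primitive recursive terms is \<open>\<Sigma>\<^sub>1\<close>\<close>

datatype pr_term = Zero | Succ | Proj nat | Comp pr_term "pr_term list" | Prec pr_term pr_term

fun eval_pr :: "pr_term \<Rightarrow> nat list \<Rightarrow> nat" where
  "eval_pr Zero xs = 0"
| "eval_pr Succ xs = Suc (nth_default 0 xs 0)"
| "eval_pr (Proj i) xs = nth_default 0 xs i"
| "eval_pr (Comp f gs) xs = eval_pr f (map (\<lambda>g. eval_pr g xs) gs)"
| "eval_pr (Prec f g) xs =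
    rec_nat (eval_pr f (tl xs)) (\<lambda>y r. eval_pr g (y # r # tl xs)) (nth_default 0 xs 0)"

lemma PR_imp_ex_pr_term: "PR n f \<Longrightarrow> \<exists>t. \<forall>xs. length xs = n \<longrightarrow> eval_pr t xs = f xs"
proof (induction rule: PR.induct)
  case (zero n)
  show ?case
    by (rule exI[of _ Zero]) simp
next
  case succ
  show ?case
    by (rule exI[of _ Succ]) (auto simp: length_Suc_conv)
next
  case (proj i n)
  then show ?case
    by (intro exI[of _ "Proj i"]) (simp add: nth_default_nth)
next
  case (comp m f gs n)
  obtain tf where tf: "\<forall>xs. length xs = m \<longrightarrow> eval_pr tf xs = f xs"
    using comp.IH(1) by blast
  have "\<forall>g\<in>set gs. \<exists>t. \<forall>xs. length xs = n \<longrightarrow> eval_pr t xs = g xs"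
    using comp.IH(2) by blast
  then obtain tg where tg: "\<forall>g\<in>set gs. \<forall>xs. length xs = n \<longrightarrow> eval_pr (tg g) xs = g xs"
    by (rule bchoice[THEN exE]) blast
  have "map (\<lambda>t. eval_pr t xs) (map tg gs) = map (\<lambda>g. g xs) gs" if "length xs = n" for xs
    using tg that by auto
  then show ?case
    using tf comp.hyps(2) by (intro exI[of _ "Comp tf (map tg gs)"]) (simp del: map_eq_conv)
next
  case (prec n f g)
  obtain tf where tf: "\<forall>xs. length xs = n \<longrightarrow> eval_pr tf xs = f xs"
    using prec.IH(1) by blast
  obtain tg where tg: "\<forall>xs. length xs = Suc (Suc n) \<longrightarrow> eval_pr tg xs = g xs"
    using prec.IH(2) by blast
  show ?case
    using tf tg by (intro exI[of _ "Prec tf tg"]) (auto simp: length_Suc_conv)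
qed

fun encode_term :: "pr_term \<Rightarrow> nat" where
  "encode_term Zero = prod_encode (0, 0)"
| "encode_term Succ = prod_encode (1, 0)"
| "encode_term (Proj i) = prod_encode (2, i)"
| "encode_term (Comp f gs) = prod_encode (3, prod_encode (encode_term f, list_encode (map encode_term gs)))"
| "encode_term (Prec f g) = prod_encode (4, prod_encode (encode_term f, encode_term g))"

text \<open>A triple \<open>(e, xs, v)\<close> claims that the term with code \<open>e\<close> maps \<open>xs\<close> to \<open>v\<close>; it is justified
  by a set of claims if it follows from them by one step of the evaluation.\<close>
definition justified :: "(nat \<times> nat list \<times> nat) set \<Rightarrow> nat \<Rightarrow> nat list \<Rightarrow> nat \<Rightarrow> bool" where
  "justified S e xs v \<longleftrightarrow> (case prod_decode e of (tag, a) \<Rightarrow> case prod_decode a of (f, g) \<Rightarrow>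
     tag = 0 \<and> v = 0 \<or>
     tag = 1 \<and> v = Suc (nth_default 0 xs 0) \<or>
     tag = 2 \<and> v = nth_default 0 xs a \<or>
     tag = 3 \<and> (\<exists>ws. length ws = length (list_decode g) \<and>
        (\<forall>j<length ws. (nth_default 0 (list_decode g) j, xs, nth_default 0 ws j) \<in> S) \<and>
        (f, ws, v) \<in> S) \<or>
     tag = 4 \<and> (\<exists>rs. (f, tl xs, nth_default 0 rs 0) \<in> S \<and>
        (\<forall>y<nth_default 0 xs 0. (g, y # nth_default 0 rs y # tl xs, nth_default 0 rs (Suc y)) \<in> S) \<and>
        v = nth_default 0 rs (nth_default 0 xs 0)))"

lemma justified_mono: "justified S e xs v \<Longrightarrow> S \<subseteq> S' \<Longrightarrow> justified S' e xs v"
  unfolding justified_def by (simp split: prod.splits) (elim disjE; blast)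

definition trace :: "(nat \<times> nat list \<times> nat) list \<Rightarrow> bool" where
  "trace L \<longleftrightarrow> (\<forall>(e, xs, v) \<in> set L. justified (set L) e xs v)"

definition computes :: "nat \<Rightarrow> nat list \<Rightarrow> nat \<Rightarrow> bool" where
  "computes e xs v \<longleftrightarrow> (\<exists>L. (e, xs, v) \<in> set L \<and> trace L)"

lemma trace_append:
  assumes "trace L" and "trace L'"
  shows "trace (L @ L')"
  unfolding trace_def
proof (clarify)
  fix e xs v
  assume "(e, xs, v) \<in> set (L @ L')"
  then have "justified (set L) e xs v \<or> justified (set L') e xs v"
    using assms unfolding trace_def by auto
  then show "justified (set (L @ L')) e xs v"
    by (auto elim: justified_mono)
qed

lemma trace_concat: "\<forall>L\<in>set Ls. trace L \<Longrightarrow> trace (concat Ls)"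
proof (induction Ls)
  case Nil
  then show ?case
    by (simp add: trace_def)
next
  case (Cons L Ls)
  then show ?case
    by (simp add: trace_append)
qed

lemma trace_Cons: "justified (set L) e xs v \<Longrightarrow> trace L \<Longrightarrow> trace ((e, xs, v) # L)"
  unfolding trace_def by (auto elim: justified_mono)

lemma justified_encode_term:
  "justified S (encode_term Zero) xs v \<longleftrightarrow> v = 0"
  "justified S (encode_term Succ) xs v \<longleftrightarrow> v = Suc (nth_default 0 xs 0)"
  "justified S (encode_term (Proj i)) xs v \<longleftrightarrow> v = nth_default 0 xs i"
  "justified S (encode_term (Comp f gs)) xs v \<longleftrightarrow> (\<exists>ws. length ws = length gs \<and>
     (\<forall>j<length gs. (encode_term (gs ! j), xs, ws ! j) \<in> S) \<and> (encode_term f, ws, v) \<in> S)"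
  "justified S (encode_term (Prec f g)) xs v \<longleftrightarrow> (\<exists>rs. (encode_term f, tl xs, nth_default 0 rs 0) \<in> S \<and>
     (\<forall>y<nth_default 0 xs 0. (encode_term g, y # nth_default 0 rs y # tl xs, nth_default 0 rs (Suc y)) \<in> S) \<and>
     v = nth_default 0 rs (nth_default 0 xs 0))"
  by (auto simp: justified_def nth_default_nth)

lemma rec_nat_unique:
  assumes "y \<le> h" and "s 0 = a" and "\<And>y. y < h \<Longrightarrow> s (Suc y) = f y (s y)"
  shows "s y = rec_nat a f y"
  using assms(1) by (induction y) (simp_all add: assms(2,3))

lemma trace_justified: "trace L \<Longrightarrow> (e, xs, v) \<in> set L \<Longrightarrow> justified (set L) e xs v"
  unfolding trace_def by auto

lemma trace_sound:
  assumes L: "trace L"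
  shows "(encode_term t, xs, v) \<in> set L \<Longrightarrow> v = eval_pr t xs"
proof (induction t arbitrary: xs v)
  case (Comp f gs)
  obtain ws where ws: "length ws = length gs"
    "\<forall>j<length gs. (encode_term (gs ! j), xs, ws ! j) \<in> set L" "(encode_term f, ws, v) \<in> set L"
    using trace_justified[OF L Comp.prems] unfolding justified_encode_term by blast
  have "ws = map (\<lambda>g. eval_pr g xs) gs"
    using ws(1,2) Comp.IH(2) by (auto intro: nth_equalityI)
  then show ?case
    using ws(3) Comp.IH(1) by simp
next
  case (Prec f g)
  define h where "h = nth_default 0 xs 0"
  obtain rs where rs: "(encode_term f, tl xs, nth_default 0 rs 0) \<in> set L"
    "\<forall>y<h. (encode_term g, y # nth_default 0 rs y # tl xs, nth_default 0 rs (Suc y)) \<in> set L"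
    "v = nth_default 0 rs h"
    using trace_justified[OF L Prec.prems] unfolding justified_encode_term h_def by blast
  have "nth_default 0 rs y = rec_nat (eval_pr f (tl xs)) (\<lambda>y r. eval_pr g (y # r # tl xs)) y"
    if "y \<le> h" for y
    using that by (rule rec_nat_unique) (use rs(1,2) Prec.IH in auto)
  then show ?case
    using rs(3) by (simp add: h_def)
qed (drule trace_justified[OF L], subst (asm) justified_encode_term, simp)+

lemma computes_if_justified:
  assumes "justified S e xs v" and "finite S" and "\<forall>(e', xs', v') \<in> S. computes e' xs' v'"
  shows "computes e xs v"
proof -
  have "\<forall>t\<in>S. \<exists>L. t \<in> set L \<and> trace L"
    using assms(3) unfolding computes_def by auto
  then obtain Lt where Lt: "\<forall>t\<in>S. t \<in> set (Lt t) \<and> trace (Lt t)"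
    by (rule bchoice[THEN exE]) blast
  obtain ts where ts: "set ts = S"
    using finite_list[OF assms(2)] by blast
  define L where "L = concat (map Lt ts)"
  have "S \<subseteq> set L"
    using Lt ts by (auto simp: L_def)
  moreover have "trace L"
    unfolding L_def using Lt ts by (intro trace_concat) auto
  ultimately have "trace ((e, xs, v) # L)"
    using assms(1) by (blast intro: trace_Cons justified_mono)
  then show ?thesis
    unfolding computes_def by (meson list.set_intros(1))
qed

lemma computes_eval_pr: "computes (encode_term t) xs (eval_pr t xs)"
proof (induction t arbitrary: xs)
  case (Comp f gs)
  define ws where "ws = map (\<lambda>g. eval_pr g xs) gs"
  let ?S = "insert (encode_term f, ws, eval_pr f ws) ((\<lambda>g. (encode_term g, xs, eval_pr g xs)) ` set gs)"
  have "justified ?S (encode_term (Comp f gs)) xs (eval_pr (Comp f gs) xs)"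
    unfolding justified_encode_term by (intro exI[of _ ws]) (simp add: ws_def)
  then show ?case
    by (rule computes_if_justified) (use Comp.IH in auto)
next
  case (Prec f g)
  define h where "h = nth_default 0 xs 0"
  define r where "r y = rec_nat (eval_pr f (tl xs)) (\<lambda>y r. eval_pr g (y # r # tl xs)) y" for y
  let ?S = "insert (encode_term f, tl xs, r 0) ((\<lambda>y. (encode_term g, y # r y # tl xs, r (Suc y))) ` {..<h})"
  have rs: "nth_default 0 (map r [0..<Suc h]) y = r y" if "y \<le> h" for y
    using that by (simp add: nth_default_nth del: upt_Suc)
  have "justified ?S (encode_term (Prec f g)) xs (eval_pr (Prec f g) xs)"
    unfolding justified_encode_term
  proof (intro exI[of _ "map r [0..<Suc h]"] conjI allI impI)
    fix y
    assume "y < nth_default 0 xs 0"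
    then show "(encode_term g, y # nth_default 0 (map r [0..<Suc h]) y # tl xs,
        nth_default 0 (map r [0..<Suc h]) (Suc y)) \<in> ?S"
      using rs[of y] rs[of "Suc y"] by (simp add: h_def del: upt_Suc)
  qed (use rs in \<open>simp_all add: h_def r_def del: upt_Suc\<close>)
  then show ?case
    by (rule computes_if_justified) (use Prec.IH in \<open>auto simp: r_def\<close>)
qed (rule computes_if_justified[where S = "{}", simplified], subst justified_encode_term, simp)+

lemma computes_encode_term_iff: "computes (encode_term t) xs v \<longleftrightarrow> v = eval_pr t xs"
  using trace_sound computes_eval_pr unfolding computes_def by blast

definition triple_encode :: "nat \<times> nat list \<times> nat \<Rightarrow> nat" where
  "triple_encode t = (case t of (e, xs, v) \<Rightarrow> prod_encode (e, prod_encode (list_encode xs, v)))"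

definition triple_decode :: "nat \<Rightarrow> nat \<times> nat list \<times> nat" where
  "triple_decode u = (case prod_decode u of (e, p) \<Rightarrow> case prod_decode p of (c, v) \<Rightarrow> (e, list_decode c, v))"

lemma triple_decode_encode [simp]: "triple_decode (triple_encode t) = t"
  by (simp add: triple_decode_def triple_encode_def split: prod.split)

lemma triple_encode_decode [simp]: "triple_encode (triple_decode u) = u"
  by (simp add: triple_decode_def triple_encode_def split: prod.split)
     (metis prod_decode_inverse)

lemma mem_triple_decode_image_iff: "t \<in> triple_decode ` X \<longleftrightarrow> triple_encode t \<in> X"
  by (metis image_iff triple_decode_encode triple_encode_decode)

lemma prim_rec_triple_encode:
  "prim_rec n e \<Longrightarrow> prim_rec_list n F \<Longrightarrow> prim_rec n v \<Longrightarrow> prim_rec n (\<lambda>xs. triple_encode (e xs, F xs, v xs))"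
  unfolding triple_encode_def prim_rec_list_def by (simp add: prim_rec_prod_encode)

lemma sigma_rel_justified_args:
  "sigma_rel (Suc 0) (Suc (Suc (Suc (Suc 0))))
    (\<lambda>as. justified (triple_decode ` set (list_decode (as ! 3))) (as ! 0) (list_decode (as ! 1)) (as ! 2))"
  unfolding justified_def prod.case_eq_if mem_triple_decode_image_iff ex_list_conv_ex_list_decode
  by (intro sigma_rel_disj sigma_rel_conj sigma_rel_ex sigma_rel_of_prim_rec_rel;
      intro prim_rec_rel_conj prim_rec_rel_disj prim_rec_rel_ball prim_rec_rel_eq prim_rec_rel_member
        prim_rec_triple_encode prim_rec_list_decode prim_rec_list_Cons prim_rec_list_tl
        prim_rec_nth_default prim_rec_length prim_rec_fst_prod_decode prim_rec_snd_prod_decode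
        prim_rec_Suc prim_rec_const prim_rec_proj prim_rec_hd prim_rec_hd_tl prim_rec_nth_tl prim_rec_nth_tl2;
      simp)

lemma sigma_rel_justified:
  assumes "prim_rec n T" and "prim_rec n e" and "prim_rec n c" and "prim_rec n v"
  shows "sigma_rel (Suc 0) n
    (\<lambda>as. justified (triple_decode ` set (list_decode (T as))) (e as) (list_decode (c as)) (v as))"
proof -
  have "prim_rec_tuple n (Suc (Suc (Suc (Suc 0)))) (\<lambda>as. [e as, c as, v as, T as])"
    by (intro prim_rec_tuple_Cons prim_rec_tuple_Nil assms)
  from sigma_rel_compose[OF sigma_rel_justified_args this] show ?thesis
    by simp
qed

lemma triple_decode_components:
  "fst (triple_decode u) = fst (prod_decode u)"
  "fst (snd (triple_decode u)) = list_decode (fst (prod_decode (snd (prod_decode u))))"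
  "snd (snd (triple_decode u)) = snd (prod_decode (snd (prod_decode u)))"
  by (simp_all add: triple_decode_def split: prod.split)

lemma computes_iff_ex_code: "computes e xs v \<longleftrightarrow>
    (\<exists>T. (e, xs, v) \<in> set (map triple_decode (list_decode T)) \<and> trace (map triple_decode (list_decode T)))"
  unfolding computes_def
proof
  assume "\<exists>L. (e, xs, v) \<in> set L \<and> trace L"
  then obtain L where "(e, xs, v) \<in> set L" and "trace L"
    by blast
  moreover have "map triple_decode (list_decode (list_encode (map triple_encode L))) = L"
    by (simp add: comp_def)
  ultimately show "\<exists>T. (e, xs, v) \<in> set (map triple_decode (list_decode T)) \<and> trace (map triple_decode (list_decode T))"
    by metis
qed blast

lemma sigma_rel_computes_args:
  "sigma_rel (Suc 0) (Suc (Suc (Suc 0))) (\<lambda>as. computes (as ! 0) (list_decode (as ! 1)) (as ! 2))"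
  unfolding computes_iff_ex_code trace_def set_map Ball_image_comp comp_def prod.case_eq_if
    mem_triple_decode_image_iff ball_set_conv_nth_default[where d = 0] triple_decode_components
  by (intro sigma_rel_ex sigma_rel_conj sigma_rel_ball sigma_rel_justified sigma_rel_of_prim_rec_rel;
      intro prim_rec_rel_member prim_rec_triple_encode prim_rec_list_decode prim_rec_length
        prim_rec_nth_default prim_rec_fst_prod_decode prim_rec_snd_prod_decode
        prim_rec_proj prim_rec_hd prim_rec_hd_tl prim_rec_nth_tl prim_rec_nth_tl2;
      simp)

lemma sigma_rel_computes:
  assumes "prim_rec n e" and "prim_rec_list n F" and "prim_rec n v"
  shows "sigma_rel (Suc 0) n (\<lambda>as. computes (e as) (F as) (v as))"
proof -
  have "prim_rec_tuple n (Suc (Suc (Suc 0))) (\<lambda>as. [e as, list_encode (F as), v as])"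
    using assms unfolding prim_rec_list_def by (intro prim_rec_tuple_Cons prim_rec_tuple_Nil)
  from sigma_rel_compose[OF sigma_rel_computes_args this] show ?thesis
    by simp
qed

section \<open>The arithmetical hierarchy is proper\<close>

text \<open>As \<open>e\<close> varies, \<open>sigma_univ m e\<close> runs through all \<open>\<Sigma>\<^sub>m\<close> relations of every arity. It is itself
  \<open>\<Sigma>\<^sub>m\<close> only for \<open>m \<ge> 1\<close>: at level 0 it is \<open>\<Pi>\<^sub>1\<close>.\<close>
primrec sigma_univ :: "nat \<Rightarrow> nat \<Rightarrow> nat list \<Rightarrow> bool" where
  "sigma_univ 0 e xs \<longleftrightarrow> \<not> computes e xs 0"
| "sigma_univ (Suc m) e xs \<longleftrightarrow> (\<exists>y. \<not> sigma_univ m e (y # xs))"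

lemma sigma_univ_universal:
  "sigma_rel m k P \<Longrightarrow> \<exists>e. \<forall>xs. length xs = k \<longrightarrow> (P xs \<longleftrightarrow> sigma_univ m e xs)"
proof (induction m arbitrary: k P)
  case 0
  then obtain f where f: "PR k f" "\<forall>xs. length xs = k \<longrightarrow> (P xs \<longleftrightarrow> f xs \<noteq> 0)"
    by auto
  obtain t where "\<forall>xs. length xs = k \<longrightarrow> eval_pr t xs = f xs"
    using PR_imp_ex_pr_term[OF f(1)] by blast
  with f(2) show ?case
    by (intro exI[of _ "encode_term t"]) (auto simp: computes_encode_term_iff)
next
  case (Suc m)
  then obtain Q where Q: "sigma_rel m (Suc k) (\<lambda>ys. \<not> Q ys)"
    and P: "\<forall>xs. length xs = k \<longrightarrow> (P xs \<longleftrightarrow> (\<exists>y. Q (y # xs)))"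
    by auto
  obtain e where e: "\<forall>ys. length ys = Suc k \<longrightarrow> (\<not> Q ys \<longleftrightarrow> sigma_univ m e ys)"
    using Suc.IH[OF Q] by blast
  have "P xs \<longleftrightarrow> sigma_univ (Suc m) e xs" if "length xs = k" for xs
  proof -
    have "Q (y # xs) \<longleftrightarrow> \<not> sigma_univ m e (y # xs)" for y
      using e[rule_format, of "y # xs"] that by auto
    then show ?thesis
      using P that by simp
  qed
  then show ?case
    by blast
qed

lemma sigma_rel_sigma_univ: "sigma_rel (Suc m) (Suc k) (\<lambda>ys. sigma_univ (Suc m) (hd ys) (tl ys))"
proof (induction m arbitrary: k)
  case 0
  have "prim_rec_list (Suc (Suc k)) (\<lambda>ws. tl (tl ws))"
    by (rule prim_rec_list_of_tuple[OF prim_rec_tuple_tl_arg[OF prim_rec_tuple_tl]])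
  then have "sigma_rel (Suc 0) (Suc (Suc k)) (\<lambda>ws. computes (hd (tl ws)) (hd ws # tl (tl ws)) 0)"
    by (intro sigma_rel_computes prim_rec_hd_tl prim_rec_list_Cons prim_rec_hd prim_rec_const)
  from sigma_rel_ex[OF this] show ?case
    by (rule sigma_rel_cong) simp
next
  case (Suc m)
  have "prim_rec_tuple (Suc (Suc k)) (Suc (Suc k)) (\<lambda>ws. hd (tl ws) # hd ws # tl (tl ws))"
    by (intro prim_rec_tuple_Cons prim_rec_hd_tl prim_rec_hd prim_rec_tuple_tl_arg prim_rec_tuple_tl)
  from sigma_rel_compose[OF Suc.IH this]
  have "sigma_rel (Suc m) (Suc (Suc k)) (\<lambda>ws. \<not> \<not> sigma_univ (Suc m) (hd (tl ws)) (hd ws # tl (tl ws)))"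
    by simp
  then show ?case
    by (rule sigma_rel_SucI) simp
qed

lemma not_sigma_rel_diagonal: "\<not> sigma_rel m (Suc 0) (\<lambda>xs. \<not> sigma_univ m (xs ! 0) [xs ! 0])"
proof
  assume "sigma_rel m (Suc 0) (\<lambda>xs. \<not> sigma_univ m (xs ! 0) [xs ! 0])"
  then obtain e where "\<forall>xs. length xs = Suc 0 \<longrightarrow> (\<not> sigma_univ m (xs ! 0) [xs ! 0] \<longleftrightarrow> sigma_univ m e xs)"
    using sigma_univ_universal by blast
  then have "\<not> sigma_univ m e [e] \<longleftrightarrow> sigma_univ m e [e]"
    by (auto dest: spec[of _ "[e]"])
  then show False
    by blast
qed

theorem ex_pi_rel_not_sigma_rel:
  "\<exists>A. pi_rel (Suc m) (Suc 0) (\<lambda>xs. A (xs ! 0)) \<and> \<not> sigma_rel (Suc m) (Suc 0) (\<lambda>xs. A (xs ! 0))"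
proof (intro exI conjI)
  have "prim_rec_tuple (Suc 0) (Suc (Suc 0)) (\<lambda>xs. [xs ! 0, xs ! 0])"
    by (intro prim_rec_tuple_Cons prim_rec_tuple_Nil prim_rec_proj) simp_all
  from sigma_rel_compose[OF sigma_rel_sigma_univ this]
  show "pi_rel (Suc m) (Suc 0) (\<lambda>xs. \<not> sigma_univ (Suc m) (xs ! 0) [xs ! 0])"
    unfolding pi_rel_def by (rule sigma_rel_cong) simp
qed (rule not_sigma_rel_diagonal)

section \<open>Connectedness relations and equivalence relations\<close>

lemma rtrancl_iff_ex_path:
  shows "(x, y) \<in> R\<^sup>* \<longleftrightarrow> (\<exists>ps l. nth_default d ps 0 = x \<and> nth_default d ps l = y \<and>
    (\<forall>i<l. (nth_default d ps i, nth_default d ps (Suc i)) \<in> R))"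
proof
  assume "(x, y) \<in> R\<^sup>*"
  then obtain l f where f: "f 0 = x" "f l = y" "\<forall>i<l. (f i, f (Suc i)) \<in> R"
    by (auto simp: rtrancl_power relpow_fun_conv)
  have "nth_default d (map f [0..<Suc l]) i = f i" if "i \<le> l" for i
    using that by (simp add: nth_default_nth del: upt_Suc)
  with f show "\<exists>ps l. nth_default d ps 0 = x \<and> nth_default d ps l = y \<and>
    (\<forall>i<l. (nth_default d ps i, nth_default d ps (Suc i)) \<in> R)"
    by (intro exI[of _ "map f [0..<Suc l]"] exI[of _ l]) auto
next
  assume "\<exists>ps l. nth_default d ps 0 = x \<and> nth_default d ps l = y \<and>
    (\<forall>i<l. (nth_default d ps i, nth_default d ps (Suc i)) \<in> R)"
  then show "(x, y) \<in> R\<^sup>*"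
    unfolding rtrancl_power relpow_fun_conv by blast
qed

lemma Sigma0_rtrancl:
  assumes R: "Sigma0 (Suc m) R"
  shows "Sigma0 (Suc m) (R\<^sup>*)"
proof -
  have R_at: "sigma_rel (Suc m) n (\<lambda>xs. (a xs, b xs) \<in> R)" if "prim_rec n a" and "prim_rec n b" for n a b
  proof -
    have "prim_rec_tuple n (Suc (Suc 0)) (\<lambda>xs. [a xs, b xs])"
      using that by (intro prim_rec_tuple_Cons prim_rec_tuple_Nil)
    from sigma_rel_compose[OF R[unfolded Sigma0_def numeral_2_eq_2] this] show ?thesis
      by simp
  qed
  have "sigma_rel (Suc m) (Suc (Suc 0)) (\<lambda>xs. \<exists>c l. nth_default 0 (list_decode c) 0 = xs ! 0 \<and>
    nth_default 0 (list_decode c) l = xs ! 1 \<and>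
    (\<forall>i<l. (nth_default 0 (list_decode c) i, nth_default 0 (list_decode c) (Suc i)) \<in> R))"
    by (intro sigma_rel_ex sigma_rel_conj sigma_rel_ball R_at sigma_rel_of_prim_rec_rel;
        intro prim_rec_rel_eq prim_rec_nth_default prim_rec_list_decode prim_rec_Suc prim_rec_const
          prim_rec_proj prim_rec_hd prim_rec_hd_tl prim_rec_hd_tl2 prim_rec_nth_tl prim_rec_nth_tl2;
        simp)
  then show ?thesis
    unfolding Sigma0_def numeral_2_eq_2
    by (rule sigma_rel_cong) (simp add: rtrancl_iff_ex_path[where d = 0] ex_list_conv_ex_list_decode)
qed

lemma Sigma0_graphable_imp_Sigma0: "Sigma0_graphable (Suc m) E \<Longrightarrow> Sigma0 (Suc m) E"
  unfolding Sigma0_graphable_def using Sigma0_rtrancl by blast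

text \<open>\<open>\<langle>a, i\<rangle>\<close> and \<open>\<langle>a, j\<rangle>\<close> are identified exactly when \<open>A a\<close>, so \<open>A\<close> can be read off the relation.\<close>
definition pair_equiv :: "(nat \<Rightarrow> bool) \<Rightarrow> (nat \<times> nat) set" where
  "pair_equiv A =
    {(x, y). x = y \<or> fst (prod_decode x) = fst (prod_decode y) \<and> A (fst (prod_decode x))}"

lemma equiv_pair_equiv: "equiv UNIV (pair_equiv A)"
  unfolding pair_equiv_def equiv_def refl_on_def sym_def trans_def by auto

lemma Pi0_pair_equiv:
  assumes A: "pi_rel m (Suc 0) (\<lambda>xs. A (xs ! 0))"
  shows "Pi0 m (pair_equiv A)"
proof -
  have "prim_rec_tuple (Suc (Suc 0)) (Suc 0) (\<lambda>xs. [fst (prod_decode (xs ! 0))])"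
    by (intro prim_rec_tuple_Cons prim_rec_tuple_Nil prim_rec_fst_prod_decode prim_rec_proj) simp
  from sigma_rel_compose[OF A[unfolded pi_rel_def] this]
  have not_A: "sigma_rel m (Suc (Suc 0)) (\<lambda>xs. \<not> A (fst (prod_decode (xs ! 0))))"
    by simp
  have "sigma_rel m (Suc (Suc 0)) (\<lambda>xs. xs ! 0 \<noteq> xs ! 1)"
    and "sigma_rel m (Suc (Suc 0)) (\<lambda>xs. fst (prod_decode (xs ! 0)) \<noteq> fst (prod_decode (xs ! 1)))"
    by (intro sigma_rel_of_prim_rec_rel prim_rec_rel_not prim_rec_rel_eq prim_rec_fst_prod_decode
        prim_rec_proj; simp)+
  from sigma_rel_conj[OF this(1) sigma_rel_disj[OF this(2) not_A]] show ?thesis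
    unfolding Pi0_def pi_rel_def numeral_2_eq_2 by (rule sigma_rel_cong) (auto simp: pair_equiv_def)
qed

lemma sigma_rel_of_Sigma0_pair_equiv:
  assumes E: "Sigma0 m (pair_equiv A)"
  shows "sigma_rel m (Suc 0) (\<lambda>xs. A (xs ! 0))"
proof -
  have "prim_rec_tuple (Suc 0) (Suc (Suc 0)) (\<lambda>xs. [prod_encode (xs ! 0, 0), prod_encode (xs ! 0, 1)])"
    by (intro prim_rec_tuple_Cons prim_rec_tuple_Nil prim_rec_prod_encode prim_rec_proj prim_rec_const)
      simp_all
  from sigma_rel_compose[OF E[unfolded Sigma0_def numeral_2_eq_2] this] show ?thesis
    by (rule sigma_rel_cong) (simp add: pair_equiv_def)
qed

theorem proposition3p1:
  fixes n :: nat
  assumes "n \<ge> 1"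
  shows "(\<forall>E. equiv UNIV E \<and> \<not> Sigma0 n E \<longrightarrow> \<not> Sigma0_graphable n E)
       \<and> (\<exists>E. equiv UNIV E \<and> Pi0 n E \<and> \<not> Sigma0_graphable n E)"
proof -
  obtain m where n: "n = Suc m"
    using assms by (cases n) auto
  obtain A where A: "pi_rel n (Suc 0) (\<lambda>xs. A (xs ! 0))" "\<not> sigma_rel n (Suc 0) (\<lambda>xs. A (xs ! 0))"
    unfolding n using ex_pi_rel_not_sigma_rel by blast
  have "\<not> Sigma0 n (pair_equiv A)"
    using A(2) sigma_rel_of_Sigma0_pair_equiv by blast
  moreover have "Pi0 n (pair_equiv A)"
    using A(1) by (rule Pi0_pair_equiv)
  ultimately show ?thesis
    using equiv_pair_equiv Sigma0_graphable_imp_Sigma0 unfolding n by blast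
qed

end
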